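(* Let $W$ be a weighing matrix of order $n$ and weight $k$ with columns $w_1,\dots,w_n$, let $C_i=w_iw_i^T$, and let $L_1,\dots,L_f$ be mutually suitable Latin squares of side $n$ with $L_m=(l_m(i,j))$. Let $\widetilde W_m=(C_{l_m(i,j)})_{i,j=1}^n$ for $m=1,\dots,f$. Define the $n^2\times n^2$ block matrix $W'$ whose $(i,j)$ block is $w_jw_i^T$. Then $W'$ is a weighing matrix of order $n^2$ and weight $k^2$, and $W',\widetilde W_1,\dots,\widetilde W_f$ form a set of $f+1$ mutually unbiased weighing matrices of order $n^2$ and weight $k^2$.
   Context: A weighing matrix of order $n$ and weight $k$ is an $n\times n$ matrix with entries in $\{1,-1,0\}$ such that $WW^T=kI_n$. Two weighing matrices $W_1,W_2$ of order $N$ and weight $K$ are unbiased if $\frac{1}{\sqrt{K}}W_1W_2^T$ is a weighing matrix of order $N$ and weight $K$; mutually unbiased means pairwise unbiased. Two Latin squares $L_1,L_2$ of side $n$ (symbols $\{1,\dots,n\}$) are suitable if for every row $a$ of $L_1$ and row $b$ of $L_2$ there is exactly one column $c$ with $L_1(a,c)=L_2(b,c)$; mutually suitable means pairwise suitable. *)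

theory Defs
  imports Complex_Main
begin

(* Matrices of order N are represented as functions nat => nat => real, only
   the entries with indices < N matter (0-indexed rows/columns). *)

definition weighing :: "nat \<Rightarrow> real \<Rightarrow> (nat \<Rightarrow> nat \<Rightarrow> real) \<Rightarrow> bool" where
  "weighing N K W \<longleftrightarrow>
     (\<forall>i<N. \<forall>j<N. W i j \<in> {1, -1, 0}) \<and>
     (\<forall>i<N. \<forall>j<N. (\<Sum>l<N. W i l * W j l) = (if i = j then K else 0))"

definition mat_mult_T :: "nat \<Rightarrow> (nat \<Rightarrow> nat \<Rightarrow> real) \<Rightarrow> (nat \<Rightarrow> nat \<Rightarrow> real) \<Rightarrow> nat \<Rightarrow> nat \<Rightarrow> real" where
  "mat_mult_T N A B = (\<lambda>i j. \<Sum>l<N. A i l * B j l)"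

definition unbiased :: "nat \<Rightarrow> real \<Rightarrow> (nat \<Rightarrow> nat \<Rightarrow> real) \<Rightarrow> (nat \<Rightarrow> nat \<Rightarrow> real) \<Rightarrow> bool" where
  "unbiased N K W1 W2 \<longleftrightarrow> weighing N K W1 \<and> weighing N K W2 \<and>
     weighing N K (\<lambda>i j. mat_mult_T N W1 W2 i j / sqrt K)"

definition mutually_unbiased :: "nat \<Rightarrow> real \<Rightarrow> nat \<Rightarrow> (nat \<Rightarrow> nat \<Rightarrow> nat \<Rightarrow> real) \<Rightarrow> bool" where
  "mutually_unbiased N K M Ws \<longleftrightarrow>
     (\<forall>p<M. weighing N K (Ws p)) \<and>
     (\<forall>p<M. \<forall>q<M. p \<noteq> q \<longrightarrow> unbiased N K (Ws p) (Ws q))"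

definition latin_square :: "nat \<Rightarrow> (nat \<Rightarrow> nat \<Rightarrow> nat) \<Rightarrow> bool" where
  "latin_square n L \<longleftrightarrow>
     (\<forall>i<n. bij_betw (\<lambda>j. L i j) {..<n} {..<n}) \<and>
     (\<forall>j<n. bij_betw (\<lambda>i. L i j) {..<n} {..<n})"

definition suitable :: "nat \<Rightarrow> (nat \<Rightarrow> nat \<Rightarrow> nat) \<Rightarrow> (nat \<Rightarrow> nat \<Rightarrow> nat) \<Rightarrow> bool" where
  "suitable n L1 L2 \<longleftrightarrow>
     (\<forall>a<n. \<forall>b<n. \<exists>!c. c < n \<and> L1 a c = L2 b c)"

definition mutually_suitable :: "nat \<Rightarrow> nat \<Rightarrow> (nat \<Rightarrow> nat \<Rightarrow> nat \<Rightarrow> nat) \<Rightarrow> bool" where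
  "mutually_suitable n f Ls \<longleftrightarrow>
     (\<forall>m<f. latin_square n (Ls m)) \<and>
     (\<forall>m<f. \<forall>m'<f. m \<noteq> m' \<longrightarrow> suitable n (Ls m) (Ls m'))"

(* W' : block (i,j) is w_j w_i^T, where w_j is the j-th column of W.
   Row index i*n+a, column index j*n+b. *)
definition Wprime :: "nat \<Rightarrow> (nat \<Rightarrow> nat \<Rightarrow> real) \<Rightarrow> nat \<Rightarrow> nat \<Rightarrow> real" where
  "Wprime n W = (\<lambda>r c. let i = r div n; a = r mod n; j = c div n; b = c mod n
                        in W a j * W b i)"

(* C_l = w_l w_l^T ; W~ has block (i,j) equal to C_{L i j} *)
definition Wtilde :: "nat \<Rightarrow> (nat \<Rightarrow> nat \<Rightarrow> real) \<Rightarrow> (nat \<Rightarrow> nat \<Rightarrow> nat) \<Rightarrow> nat \<Rightarrow> nat \<Rightarrow> real" where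
  "Wtilde n W L = (\<lambda>r c. let i = r div n; a = r mod n; j = c div n; b = c mod n
                        in W a (L i j) * W b (L i j))"

end

theory Submission
  imports Defs "Jordan_Normal_Form.Determinant"
begin

text \<open>Every block computation reduces to the orthogonality of the columns of \<open>W\<close>
(which follows from that of its rows, since a one-sided inverse of a square matrix is
two-sided): in a product of two block matrices the inner sum over \<open>b\<close> collapses to
\<open>k\<close> times an indicator, and the remaining sum over block columns is evaluated with
the Latin square properties. For \<open>W'\<close> against \<open>W\<^sub>L\<close> the indicator picks the
position of a symbol in a row of \<open>L\<close>; for \<open>W\<^sub>L\<close> against \<open>W\<^sub>L\<^sub>'\<close> it picks the
unique column where two rows agree, and by suitability the agreeing symbols again form
a Latin square, so the product is \<open>k\<close> times a matrix of the same kind.\<close>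

section \<open>Weighing matrices\<close>

lemma weighing_entry:
  "weighing N K A \<Longrightarrow> i < N \<Longrightarrow> j < N \<Longrightarrow> A i j \<in> {1, -1, 0}"
  unfolding weighing_def by blast

lemma weighing_rows_orthogonal:
  "weighing N K A \<Longrightarrow> i < N \<Longrightarrow> j < N \<Longrightarrow> (\<Sum>l<N. A i l * A j l) = (if i = j then K else 0)"
  unfolding weighing_def by blast

lemma weighing_zero_weight:
  assumes "weighing N 0 A" "i < N" "j < N"
  shows "A i j = 0"
proof -
  have "(\<Sum>l<N. (A i l)\<^sup>2) = 0"
    using weighing_rows_orthogonal[OF assms(1,2,2)] by (simp add: power2_eq_square)
  then have "\<forall>l\<in>{..<N}. (A i l)\<^sup>2 = 0" by (subst (asm) sum_nonneg_eq_0_iff) auto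
  then show ?thesis using assms(3) by simp
qed

lemma weighing_cong:
  assumes "weighing N K A" "\<And>i j. i < N \<Longrightarrow> j < N \<Longrightarrow> B i j = A i j"
  shows "weighing N K B"
  using assms unfolding weighing_def by simp

lemma weighing_transpose:
  assumes w: "weighing N K A"
  shows "weighing N K (\<lambda>i j. A j i)"
proof (cases "K = 0")
  case True
  then have "\<forall>i<N. \<forall>j<N. A j i = 0" using weighing_zero_weight[of N A] w by blast
  then show ?thesis unfolding weighing_def using True by simp
next
  case False
  define M where "M = mat N N (\<lambda>(i, j). A i j)"
  have M: "M \<in> carrier_mat N N" and Mt: "(1/K) \<cdot>\<^sub>m transpose_mat M \<in> carrier_mat N N"
    unfolding M_def by simp_all
  have "M * ((1/K) \<cdot>\<^sub>m transpose_mat M) = 1\<^sub>m N"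
  proof (rule eq_matI)
    fix i j assume "i < dim_row (1\<^sub>m N :: real mat)" "j < dim_col (1\<^sub>m N :: real mat)"
    then have ij: "i < N" "j < N" by simp_all
    then have "(M * ((1/K) \<cdot>\<^sub>m transpose_mat M)) $$ (i, j) = (1/K) * (\<Sum>l<N. A i l * A j l)"
      by (simp add: M_def scalar_prod_def atLeast0LessThan sum_distrib_left mult_ac)
    also have "\<dots> = 1\<^sub>m N $$ (i, j)"
      using weighing_rows_orthogonal[OF w ij] ij False by simp
    finally show "(M * ((1/K) \<cdot>\<^sub>m transpose_mat M)) $$ (i, j) = 1\<^sub>m N $$ (i, j)" .
  qed (use M Mt in \<open>simp_all only: carrier_matD index_mult_mat index_one_mat\<close>)
  then have inv: "((1/K) \<cdot>\<^sub>m transpose_mat M) * M = 1\<^sub>m N"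
    by (rule mat_mult_left_right_inverse[OF M Mt])
  have "(\<Sum>l<N. A l i * A l j) = (if i = j then K else 0)" if ij: "i < N" "j < N" for i j
  proof -
    have "(1/K) * (\<Sum>l<N. A l i * A l j) = (((1/K) \<cdot>\<^sub>m transpose_mat M) * M) $$ (i, j)"
      using ij by (simp add: M_def scalar_prod_def atLeast0LessThan sum_distrib_left mult_ac)
    also have "\<dots> = (if i = j then 1 else 0)"
      using ij by (simp add: inv)
    finally show ?thesis
      using False by (cases "i = j") (simp_all add: field_simps)
  qed
  then show ?thesis using w unfolding weighing_def by simp
qed

lemma weighing_columns_orthogonal:
  assumes "weighing N K A" "i < N" "j < N"
  shows "(\<Sum>l<N. A l i * A l j) = (if i = j then K else 0)"
  using weighing_rows_orthogonal[OF weighing_transpose[OF assms(1)] assms(2,3)] by simp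

lemma sum_mult_columns:
  assumes "weighing N K A" "p < N" "q < N"
  shows "(\<Sum>l<N. (x * A l p) * (y * A l q)) = (if p = q then K * (x * y) else 0)"
proof -
  have "(\<Sum>l<N. (x * A l p) * (y * A l q)) = (x * y) * (\<Sum>l<N. A l p * A l q)"
    by (simp add: sum_distrib_left algebra_simps)
  then show ?thesis using weighing_columns_orthogonal[OF assms] by simp
qed

lemma unbiasedI:
  assumes "weighing N K A" "weighing N K B" "weighing N K H"
    and "\<And>i j. i < N \<Longrightarrow> j < N \<Longrightarrow> mat_mult_T N A B i j = sqrt K * H i j"
  shows "unbiased N K A B"
proof -
  have "weighing N K (\<lambda>i j. mat_mult_T N A B i j / sqrt K)"
  proof (rule weighing_cong[OF assms(3)])
    fix i j assume ij: "i < N" "j < N"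
    show "mat_mult_T N A B i j / sqrt K = H i j"
    proof (cases "K = 0")
      \<comment> \<open>both sides vanish: \<open>x / 0 = 0\<close>, and a weighing matrix of weight 0 is zero\<close>
      case True
      then show ?thesis using weighing_zero_weight[of N H i j] assms(3) ij by simp
    qed (simp add: assms(4)[OF ij])
  qed
  then show ?thesis unfolding unbiased_def using assms(1,2) by simp
qed

lemma unbiased_commute:
  assumes "unbiased N K A B"
  shows "unbiased N K B A"
proof -
  have "weighing N K (\<lambda>i j. mat_mult_T N A B i j / sqrt K)"
    using assms unfolding unbiased_def by simp
  then have "weighing N K (\<lambda>i j. mat_mult_T N A B j i / sqrt K)"
    by (rule weighing_transpose)
  moreover have "(\<lambda>i j. mat_mult_T N A B j i / sqrt K) = (\<lambda>i j. mat_mult_T N B A i j / sqrt K)"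
    by (simp add: mat_mult_T_def mult.commute)
  ultimately have "weighing N K (\<lambda>i j. mat_mult_T N B A i j / sqrt K)"
    by (simp only:)
  then show ?thesis using assms unfolding unbiased_def by simp
qed

lemma mutually_unbiased_prepend:
  assumes "weighing N K A"
    and "\<And>m. m < f \<Longrightarrow> unbiased N K A (Ws m)"
    and "\<And>m m'. m < f \<Longrightarrow> m' < f \<Longrightarrow> m \<noteq> m' \<Longrightarrow> unbiased N K (Ws m) (Ws m')"
  shows "mutually_unbiased N K (f + 1) (\<lambda>p. if p = 0 then A else Ws (p - 1))"
  unfolding mutually_unbiased_def
proof (intro conjI allI impI)
  fix p assume "p < f + 1"
  then show "weighing N K (if p = 0 then A else Ws (p - 1))"
    using assms(1) assms(2)[of "p - 1"] unfolding unbiased_def by auto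
next
  fix p q assume pq: "p < f + 1" "q < f + 1" "p \<noteq> q"
  then consider "p = 0" | "q = 0" | "p \<noteq> 0" "q \<noteq> 0" by blast
  then show "unbiased N K (if p = 0 then A else Ws (p - 1)) (if q = 0 then A else Ws (q - 1))"
  proof cases
    case 1
    then show ?thesis using pq assms(2)[of "q - 1"] by simp
  next
    case 2
    then show ?thesis using pq unbiased_commute[OF assms(2)[of "p - 1"]] by simp
  next
    case 3
    then show ?thesis using pq assms(3)[of "p - 1" "q - 1"] by simp
  qed
qed

section \<open>Block matrices\<close>

definition block_matrix :: "nat \<Rightarrow> (nat \<Rightarrow> nat \<Rightarrow> nat \<Rightarrow> nat \<Rightarrow> real) \<Rightarrow> nat \<Rightarrow> nat \<Rightarrow> real" where
  "block_matrix n F = (\<lambda>r c. F (r div n) (r mod n) (c div n) (c mod n))"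

definition block_weighing :: "nat \<Rightarrow> real \<Rightarrow> (nat \<Rightarrow> nat \<Rightarrow> nat \<Rightarrow> nat \<Rightarrow> real) \<Rightarrow> bool" where
  "block_weighing n K F \<longleftrightarrow>
     (\<forall>i<n. \<forall>a<n. \<forall>j<n. \<forall>b<n. F i a j b \<in> {1, -1, 0}) \<and>
     (\<forall>i<n. \<forall>a<n. \<forall>i'<n. \<forall>a'<n.
        (\<Sum>j<n. \<Sum>b<n. F i a j b * F i' a' j b) = (if i = i' \<and> a = a' then K else 0))"

lemma sum_lessThan_square:
  fixes g :: "nat \<Rightarrow> real"
  shows "(\<Sum>l<n^2. g l) = (\<Sum>j<n. \<Sum>b<n. g (j * n + b))"
proof -
  have "(\<Sum>l<n^2. g l) = (\<Sum>j<n. sum g {j * n..<j * n + n})"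
    by (simp add: power2_eq_square sum.nat_group)
  also have "\<dots> = (\<Sum>j<n. \<Sum>b<n. g (j * n + b))"
  proof (rule sum.cong[OF refl])
    fix j
    have "sum g {0 + j * n..<n + j * n} = (\<Sum>b = 0..<n. g (b + j * n))"
      by (rule sum.shift_bounds_nat_ivl)
    then show "sum g {j * n..<j * n + n} = (\<Sum>b<n. g (j * n + b))"
      by (simp add: lessThan_atLeast0 add.commute)
  qed
  finally show ?thesis .
qed

lemma mat_mult_T_block_matrix:
  "mat_mult_T (n^2) (block_matrix n F) (block_matrix n G) r s
     = (\<Sum>j<n. \<Sum>b<n. F (r div n) (r mod n) j b * G (s div n) (s mod n) j b)"
  unfolding mat_mult_T_def block_matrix_def sum_lessThan_square
  by (intro sum.cong refl) auto

lemma block_index_less: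
  fixes r n :: nat
  assumes "r < n^2"
  shows "r div n < n" "r mod n < n"
proof -
  have "0 < n" using assms by (cases n) auto
  then show "r div n < n" "r mod n < n"
    using assms by (simp_all add: power2_eq_square less_mult_imp_div_less)
qed

lemma weighing_block_matrix:
  assumes F: "block_weighing n K F"
  shows "weighing (n^2) K (block_matrix n F)"
  unfolding weighing_def
proof (intro conjI allI impI)
  fix r s assume rs: "r < n^2" "s < n^2"
  note bounds = block_index_less[OF rs(1)] block_index_less[OF rs(2)]
  show "block_matrix n F r s \<in> {1, -1, 0}"
    using F bounds unfolding block_weighing_def block_matrix_def by blast
  have "(r div n = s div n \<and> r mod n = s mod n) = (r = s)"
    by (metis div_mult_mod_eq)
  moreover have "mat_mult_T (n^2) (block_matrix n F) (block_matrix n F) r s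
      = (if r div n = s div n \<and> r mod n = s mod n then K else 0)"
    unfolding mat_mult_T_block_matrix using F bounds by (simp add: block_weighing_def)
  ultimately show "(\<Sum>l<n^2. block_matrix n F r l * block_matrix n F s l) = (if r = s then K else 0)"
    unfolding mat_mult_T_def by simp
qed

lemma unbiased_block_matrixI:
  assumes "block_weighing n K F" "block_weighing n K G" "block_weighing n K H"
    and "\<And>i a h c. i < n \<Longrightarrow> a < n \<Longrightarrow> h < n \<Longrightarrow> c < n \<Longrightarrow>
           (\<Sum>j<n. \<Sum>b<n. F i a j b * G h c j b) = sqrt K * H i a h c"
  shows "unbiased (n^2) K (block_matrix n F) (block_matrix n G)"
proof (rule unbiasedI[OF weighing_block_matrix weighing_block_matrix weighing_block_matrix])
  fix r s assume "r < n^2" "s < n^2"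
  then show "mat_mult_T (n^2) (block_matrix n F) (block_matrix n G) r s = sqrt K * block_matrix n H r s"
    unfolding mat_mult_T_block_matrix
    using assms(4)[OF block_index_less[of r] block_index_less[of s]] by (simp add: block_matrix_def)
qed (fact assms)+

section \<open>Latin squares\<close>

lemma bij_betw_lessThan_iff:
  fixes f :: "nat \<Rightarrow> nat"
  shows "bij_betw f {..<n} {..<n} \<longleftrightarrow> inj_on f {..<n} \<and> (\<forall>x<n. f x < n)"
proof
  assume f: "inj_on f {..<n} \<and> (\<forall>x<n. f x < n)"
  then have "f ` {..<n} = {..<n}" by (intro endo_inj_surj) auto
  then show "bij_betw f {..<n} {..<n}" using f unfolding bij_betw_def by simp
qed (auto simp: bij_betw_def)

lemma latin_square_less:
  "latin_square n L \<Longrightarrow> i < n \<Longrightarrow> j < n \<Longrightarrow> L i j < n"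
  unfolding latin_square_def bij_betw_lessThan_iff by blast

lemma latin_square_row_bij:
  "latin_square n L \<Longrightarrow> i < n \<Longrightarrow> bij_betw (L i) {..<n} {..<n}"
  unfolding latin_square_def by simp

lemma latin_square_column_inj:
  "latin_square n L \<Longrightarrow> L i j = L i' j \<Longrightarrow> i < n \<Longrightarrow> i' < n \<Longrightarrow> j < n \<Longrightarrow> i = i'"
  unfolding latin_square_def bij_betw_lessThan_iff inj_on_def by blast

lemma latin_square_row_inj:
  "latin_square n L \<Longrightarrow> L i j = L i j' \<Longrightarrow> i < n \<Longrightarrow> j < n \<Longrightarrow> j' < n \<Longrightarrow> j = j'"
  unfolding latin_square_def bij_betw_lessThan_iff inj_on_def by blast

lemma latin_squareI:
  assumes "\<And>i j. i < n \<Longrightarrow> j < n \<Longrightarrow> L i j < n"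
    and "\<And>i j j'. L i j = L i j' \<Longrightarrow> i < n \<Longrightarrow> j < n \<Longrightarrow> j' < n \<Longrightarrow> j = j'"
    and "\<And>i i' j. L i j = L i' j \<Longrightarrow> i < n \<Longrightarrow> i' < n \<Longrightarrow> j < n \<Longrightarrow> i = i'"
  shows "latin_square n L"
  unfolding latin_square_def bij_betw_lessThan_iff inj_on_def using assms by blast

lemma latin_square_row_ex1:
  assumes "latin_square n L" "h < n" "s < n"
  shows "\<exists>!j. j < n \<and> L h j = s"
proof -
  have "s \<in> L h ` {..<n}"
    using latin_square_row_bij[OF assms(1,2)] assms(3) unfolding bij_betw_def by simp
  then show ?thesis using latin_square_row_inj[OF assms(1) _ assms(2)] by blast
qed

definition latin_position :: "nat \<Rightarrow> (nat \<Rightarrow> nat \<Rightarrow> nat) \<Rightarrow> nat \<Rightarrow> nat \<Rightarrow> nat" where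
  "latin_position n L h s = (THE j. j < n \<and> L h j = s)"

lemma latin_position:
  assumes "latin_square n L" "h < n" "s < n"
  shows "latin_position n L h s < n" "L h (latin_position n L h s) = s"
  using theI'[OF latin_square_row_ex1[OF assms]] unfolding latin_position_def by simp_all

lemma bij_betw_latin_position:
  assumes L: "latin_square n L" and s: "s < n"
  shows "bij_betw (\<lambda>h. latin_position n L h s) {..<n} {..<n}"
  unfolding bij_betw_lessThan_iff inj_on_def
  using latin_position[OF L _ s] latin_square_column_inj[OF L] by (metis lessThan_iff)

definition agreement_square ::
    "nat \<Rightarrow> (nat \<Rightarrow> nat \<Rightarrow> nat) \<Rightarrow> (nat \<Rightarrow> nat \<Rightarrow> nat) \<Rightarrow> nat \<Rightarrow> nat \<Rightarrow> nat" where
  "agreement_square n L L' i h = L i (THE j. j < n \<and> L i j = L' h j)"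

lemma latin_square_agreement_square:
  assumes L: "latin_square n L" and L': "latin_square n L'" and LL': "suitable n L L'"
  shows "latin_square n (agreement_square n L L')"
proof -
  define J where "J i h = (THE j. j < n \<and> L i j = L' h j)" for i h
  have J: "J i h < n" "L i (J i h) = L' h (J i h)" if "i < n" "h < n" for i h
    using theI'[of "\<lambda>j. j < n \<and> L i j = L' h j"] LL' that unfolding suitable_def J_def by auto
  have S: "agreement_square n L L' i h = L i (J i h)" for i h
    unfolding agreement_square_def J_def ..
  show ?thesis
  proof (rule latin_squareI, unfold S)
    show "L i (J i h) < n" if "i < n" "h < n" for i h
      using latin_square_less[OF L that(1) J(1)[OF that]] .
    show "h = h'" if "L i (J i h) = L i (J i h')" "i < n" "h < n" "h' < n" for i h h'
    proof -
      have "J i h = J i h'" using latin_square_row_inj[OF L] J that by metis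
      then show "h = h'" using latin_square_column_inj[OF L'] J that by metis
    qed
    show "i = i'" if "L i (J i h) = L i' (J i' h)" "i < n" "i' < n" "h < n" for i i' h
    proof -
      have "J i h = J i' h" using latin_square_row_inj[OF L'] J that by metis
      then show "i = i'" using latin_square_column_inj[OF L] J that by metis
    qed
  qed
qed

lemma sum_lessThan_if_unique:
  fixes g :: "nat \<Rightarrow> 'a::comm_monoid_add"
  assumes "\<exists>!c. c < n \<and> P c"
  shows "(\<Sum>c<n. if P c then g c else 0) = g (THE c. c < n \<and> P c)"
proof -
  define c0 where "c0 = (THE c. c < n \<and> P c)"
  have c0: "c0 < n" "P c0" using theI'[OF assms] unfolding c0_def by simp_all
  have "(\<Sum>c<n. if P c then g c else 0) = (\<Sum>c<n. if c = c0 then g c else 0)"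
    using assms c0 by (intro sum.cong refl) auto
  also have "\<dots> = g c0" using c0(1) by (simp add: sum.delta)
  finally show ?thesis unfolding c0_def .
qed


section \<open>The block matrices built from \<open>W\<close>\<close>

text \<open>Block \<open>(i, j)\<close> of \<open>block_matrix n (prime_blocks W P)\<close> is \<open>w\<^sub>P\<^sub>(\<^sub>i\<^sub>,\<^sub>j\<^sub>) w\<^sub>i\<^sup>T\<close>;
\<open>W'\<close> is the case \<open>P i j = j\<close>, and the normalised product of \<open>W'\<close> with \<open>W\<^sub>L\<close> is
another instance.\<close>

definition prime_blocks ::
    "(nat \<Rightarrow> nat \<Rightarrow> real) \<Rightarrow> (nat \<Rightarrow> nat \<Rightarrow> nat) \<Rightarrow> nat \<Rightarrow> nat \<Rightarrow> nat \<Rightarrow> nat \<Rightarrow> real" where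
  "prime_blocks W P i a j b = W a (P i j) * W b i"

definition tilde_blocks ::
    "(nat \<Rightarrow> nat \<Rightarrow> real) \<Rightarrow> (nat \<Rightarrow> nat \<Rightarrow> nat) \<Rightarrow> nat \<Rightarrow> nat \<Rightarrow> nat \<Rightarrow> nat \<Rightarrow> real" where
  "tilde_blocks W L i a j b = W a (L i j) * W b (L i j)"

lemma Wprime_eq_block_matrix: "Wprime n W = block_matrix n (prime_blocks W (\<lambda>i j. j))"
  by (simp add: Wprime_def block_matrix_def prime_blocks_def fun_eq_iff Let_def)

lemma Wtilde_eq_block_matrix: "Wtilde n W L = block_matrix n (tilde_blocks W L)"
  by (simp add: Wtilde_def block_matrix_def tilde_blocks_def fun_eq_iff Let_def)

lemma weighing_entry_mult:
  "weighing N K A \<Longrightarrow> i < N \<Longrightarrow> j < N \<Longrightarrow> i' < N \<Longrightarrow> j' < N \<Longrightarrow> A i j * A i' j' \<in> {1, -1, 0}"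
  using weighing_entry[of N K A i j] weighing_entry[of N K A i' j'] by auto

lemma block_weighing_prime_blocks:
  assumes W: "weighing n K W" and P: "\<And>i. i < n \<Longrightarrow> bij_betw (P i) {..<n} {..<n}"
  shows "block_weighing n (K^2) (prime_blocks W P)"
  unfolding block_weighing_def
proof (intro conjI allI impI)
  fix i a j b assume iajb: "i < n" "a < n" "j < n" "b < n"
  then have "P i j < n" using bij_betw_apply[OF P] by blast
  then show "prime_blocks W P i a j b \<in> {1, -1, 0}"
    unfolding prime_blocks_def by (rule weighing_entry_mult[OF W iajb(2) _ iajb(4,1)])
next
  fix i a i' a' assume h: "i < n" "a < n" "i' < n" "a' < n"
  have "(\<Sum>j<n. \<Sum>b<n. prime_blocks W P i a j b * prime_blocks W P i' a' j b)
      = (\<Sum>j<n. if i = i' then K * (W a (P i j) * W a' (P i' j)) else 0)"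
    by (intro sum.cong refl) (simp add: prime_blocks_def sum_mult_columns[OF W h(1) h(3)])
  also have "\<dots> = (if i = i' \<and> a = a' then K^2 else 0)"
  proof (cases "i = i'")
    case True
    have "(\<Sum>j<n. W a (P i j) * W a' (P i j)) = (\<Sum>l<n. W a l * W a' l)"
      by (rule sum.reindex_bij_betw[OF P[OF h(1)]])
    then show ?thesis
      using True weighing_rows_orthogonal[OF W h(2) h(4)]
      by (simp add: sum_distrib_left[symmetric] power2_eq_square)
  qed simp
  finally show "(\<Sum>j<n. \<Sum>b<n. prime_blocks W P i a j b * prime_blocks W P i' a' j b)
      = (if i = i' \<and> a = a' then K^2 else 0)" .
qed

lemma block_weighing_tilde_blocks:
  assumes W: "weighing n K W" and L: "latin_square n L"
  shows "block_weighing n (K^2) (tilde_blocks W L)"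
  unfolding block_weighing_def
proof (intro conjI allI impI)
  fix i a j b assume iajb: "i < n" "a < n" "j < n" "b < n"
  have Lij: "L i j < n" using L iajb(1,3) by (rule latin_square_less)
  show "tilde_blocks W L i a j b \<in> {1, -1, 0}"
    unfolding tilde_blocks_def by (rule weighing_entry_mult[OF W iajb(2) Lij iajb(4) Lij])
next
  fix i a i' a' assume h: "i < n" "a < n" "i' < n" "a' < n"
  have "(\<Sum>j<n. \<Sum>b<n. tilde_blocks W L i a j b * tilde_blocks W L i' a' j b)
      = (\<Sum>j<n. if L i j = L i' j then K * (W a (L i j) * W a' (L i' j)) else 0)"
    using h latin_square_less[OF L]
    by (intro sum.cong refl) (simp add: tilde_blocks_def sum_mult_columns[OF W])
  also have "\<dots> = (if i = i' \<and> a = a' then K^2 else 0)"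
  proof (cases "i = i'")
    case True
    have "(\<Sum>j<n. W a (L i j) * W a' (L i j)) = (\<Sum>l<n. W a l * W a' l)"
      by (rule sum.reindex_bij_betw[OF latin_square_row_bij[OF L h(1)]])
    then show ?thesis
      using True weighing_rows_orthogonal[OF W h(2) h(4)]
      by (simp add: sum_distrib_left[symmetric] power2_eq_square)
  next
    case False
    have "L i j \<noteq> L i' j" if "j < n" for j
      using latin_square_column_inj[OF L _ h(1) h(3) that] False by blast
    then have "(\<Sum>j<n. if L i j = L i' j then K * (W a (L i j) * W a' (L i' j)) else 0) = 0"
      by (intro sum.neutral) auto
    then show ?thesis using False by simp
  qed
  finally show "(\<Sum>j<n. \<Sum>b<n. tilde_blocks W L i a j b * tilde_blocks W L i' a' j b)
      = (if i = i' \<and> a = a' then K^2 else 0)" .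
qed

lemma prime_tilde_blocks_product:
  assumes W: "weighing n K W" and L: "latin_square n L"
    and h: "i < n" "a < n" "h < n" "c < n"
  shows "(\<Sum>j<n. \<Sum>b<n. prime_blocks W (\<lambda>i j. j) i a j b * tilde_blocks W L h c j b)
    = K * prime_blocks W (\<lambda>i h. latin_position n L h i) i a h c"
proof -
  have "(\<Sum>j<n. \<Sum>b<n. prime_blocks W (\<lambda>i j. j) i a j b * tilde_blocks W L h c j b)
      = (\<Sum>j<n. if L h j = i then K * (W a j * W c i) else 0)"
    using h latin_square_less[OF L]
    by (intro sum.cong refl) (auto simp: prime_blocks_def tilde_blocks_def sum_mult_columns[OF W])
  also have "\<dots> = K * (W a (latin_position n L h i) * W c i)"
    unfolding sum_lessThan_if_unique[OF latin_square_row_ex1[OF L h(3) h(1)]] latin_position_def ..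
  finally show ?thesis by (simp add: prime_blocks_def)
qed

lemma tilde_tilde_blocks_product:
  assumes W: "weighing n K W" and L: "latin_square n L" and L': "latin_square n L'"
    and LL': "suitable n L L'" and h: "i < n" "a < n" "h < n" "c < n"
  shows "(\<Sum>j<n. \<Sum>b<n. tilde_blocks W L i a j b * tilde_blocks W L' h c j b)
    = K * tilde_blocks W (agreement_square n L L') i a h c"
proof -
  have "(\<Sum>j<n. \<Sum>b<n. tilde_blocks W L i a j b * tilde_blocks W L' h c j b)
      = (\<Sum>j<n. if L i j = L' h j then K * (W a (L i j) * W c (L i j)) else 0)"
    using h latin_square_less[OF L] latin_square_less[OF L']
    by (intro sum.cong refl) (auto simp: tilde_blocks_def sum_mult_columns[OF W])
  also have "\<dots> = K * tilde_blocks W (agreement_square n L L') i a h c"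
    using LL' h unfolding suitable_def
    by (simp add: sum_lessThan_if_unique tilde_blocks_def agreement_square_def)
  finally show ?thesis .
qed

lemma bij_betw_lessThan_ident: "bij_betw (\<lambda>j. j) {..<n} {..<n}"
  by (simp add: bij_betw_def)

lemma weighing_Wprime:
  "weighing n K W \<Longrightarrow> weighing (n^2) (K^2) (Wprime n W)"
  unfolding Wprime_eq_block_matrix
  by (intro weighing_block_matrix block_weighing_prime_blocks bij_betw_lessThan_ident)

lemma unbiased_Wprime_Wtilde:
  assumes W: "weighing n K W" and K: "0 \<le> K" and L: "latin_square n L"
  shows "unbiased (n^2) (K^2) (Wprime n W) (Wtilde n W L)"
  unfolding Wprime_eq_block_matrix Wtilde_eq_block_matrix
proof (rule unbiased_block_matrixI)
  show "block_weighing n (K^2) (prime_blocks W (\<lambda>i j. j))"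
    using W bij_betw_lessThan_ident by (rule block_weighing_prime_blocks)
  show "block_weighing n (K^2) (tilde_blocks W L)"
    using W L by (rule block_weighing_tilde_blocks)
  show "block_weighing n (K^2) (prime_blocks W (\<lambda>i h. latin_position n L h i))"
    using W bij_betw_latin_position[OF L] by (rule block_weighing_prime_blocks)
  fix i a h c assume "i < n" "a < n" "h < n" "c < n"
  then show "(\<Sum>j<n. \<Sum>b<n. prime_blocks W (\<lambda>i j. j) i a j b * tilde_blocks W L h c j b)
      = sqrt (K^2) * prime_blocks W (\<lambda>i h. latin_position n L h i) i a h c"
    using prime_tilde_blocks_product[OF W L] K by simp
qed

lemma unbiased_Wtilde_Wtilde:
  assumes W: "weighing n K W" and K: "0 \<le> K"
    and L: "latin_square n L" and L': "latin_square n L'" and LL': "suitable n L L'"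
  shows "unbiased (n^2) (K^2) (Wtilde n W L) (Wtilde n W L')"
  unfolding Wtilde_eq_block_matrix
proof (rule unbiased_block_matrixI)
  show "block_weighing n (K^2) (tilde_blocks W L)"
    using W L by (rule block_weighing_tilde_blocks)
  show "block_weighing n (K^2) (tilde_blocks W L')"
    using W L' by (rule block_weighing_tilde_blocks)
  show "block_weighing n (K^2) (tilde_blocks W (agreement_square n L L'))"
    using W latin_square_agreement_square[OF L L' LL'] by (rule block_weighing_tilde_blocks)
  fix i a h c assume "i < n" "a < n" "h < n" "c < n"
  then show "(\<Sum>j<n. \<Sum>b<n. tilde_blocks W L i a j b * tilde_blocks W L' h c j b)
      = sqrt (K^2) * tilde_blocks W (agreement_square n L L') i a h c"
    using tilde_tilde_blocks_product[OF W L L' LL'] K by simp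
qed

theorem mainTheorem4:
  fixes n k f :: nat and W :: "nat \<Rightarrow> nat \<Rightarrow> real" and Ls :: "nat \<Rightarrow> nat \<Rightarrow> nat \<Rightarrow> nat"
  assumes "weighing n (real k) W"
    and "mutually_suitable n f Ls"
  shows "weighing (n^2) (real (k^2)) (Wprime n W)
    \<and> mutually_unbiased (n^2) (real (k^2)) (f + 1)
        (\<lambda>p. if p = 0 then Wprime n W else Wtilde n W (Ls (p - 1)))"
proof -
  have latin: "latin_square n (Ls m)" if "m < f" for m
    using assms(2) that unfolding mutually_suitable_def by blast
  have suitable: "suitable n (Ls m) (Ls m')" if "m < f" "m' < f" "m \<noteq> m'" for m m'
    using assms(2) that unfolding mutually_suitable_def by blast
  have weight: "real (k^2) = (real k)^2" by simp
  have prime: "weighing (n^2) ((real k)^2) (Wprime n W)"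
    using assms(1) by (rule weighing_Wprime)
  moreover have "mutually_unbiased (n^2) ((real k)^2) (f + 1)
      (\<lambda>p. if p = 0 then Wprime n W else Wtilde n W (Ls (p - 1)))"
  proof (rule mutually_unbiased_prepend[OF prime])
    show "unbiased (n^2) ((real k)^2) (Wprime n W) (Wtilde n W (Ls m))" if "m < f" for m
      using assms(1) _ latin[OF that] by (rule unbiased_Wprime_Wtilde) simp
    show "unbiased (n^2) ((real k)^2) (Wtilde n W (Ls m)) (Wtilde n W (Ls m'))"
      if "m < f" "m' < f" "m \<noteq> m'" for m m'
      using assms(1) _ latin[OF that(1)] latin[OF that(2)] suitable[OF that]
      by (rule unbiased_Wtilde_Wtilde) simp
  qed
  ultimately show ?thesis unfolding weight ..
qed

end
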